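(* Let $P$ be a normal program. Then the well-founded model $WFM(P)$ has a finite number of true atoms if and only if $P$ has the bounded term-size property.
   Context: Programs are over a first-order language with finitely many function and constant symbols. A normal program $P$ is a set of clauses $B \leftarrow L_1,\ldots,L_n$ where $B$ is an atom and each $L_i$ is a literal (an atom $A$ or a negated atom $\neg A$); $\mathcal{H}_P$ is its Herbrand base. A 3-valued interpretation is a pair $I=\langle Tr;Fa\rangle$ of subsets of $\mathcal{H}_P$; an atom $A$ is true in $I$ if $A\in Tr$ and false if $A \in Fa$; $\neg A$ is true in $I$ iff $A$ is false in $I$, and false iff $A$ is true in $I$. For a 3-valued interpretation $I$ and sets $Tr, Fa$ of ground atoms define $True^P_I(Tr)=\{A \mid A$ is not true in $I$, and there is a clause $B\leftarrow L_1,\ldots,L_n$ in $P$ and a ground substitution $\theta$ with $A=B\theta$ such that for every $1\le i\le n$, either $L_i\theta$ is true in $I$ or $L_i\theta\in Tr\}$; $False^P_I(Fa)=\{A \mid A$ is not false in $I$, and for every clause $B\leftarrow L_1,\ldots,L_n$ in $P$ and ground substitution $\theta$ with $A=B\theta$ there is some $i$ with $L_i\theta$ false in $I$ or $L_i\theta\in Fa\}$. Both are monotonic; $\mathcal{T}_I$ is the least fixed point of $True^P_I$ (obtained by iterating from $\emptyset$) and $\mathcal{F}_I$ the greatest fixed point of $False^P_I$ (obtained by iterating from $\mathcal{H}_P$). Define $WFM_0=\langle\emptyset;\emptyset\rangle$, $WFM_{\alpha+1}=WFM_\alpha\cup\langle \mathcal{T}_{WFM_\alpha};\mathcal{F}_{WFM_\alpha}\rangle$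 (componentwise union), and $WFM_\alpha=\bigcup_{\beta<\alpha}WFM_\beta$ for limit ordinals $\alpha$. $WFM(P)$ is $WFM_\delta$ for the least ordinal $\delta$ such that $\mathcal{T}_{WFM_\delta}$ and $\mathcal{F}_{WFM_\delta}$ are both empty; it is the well-founded model of $P$. Bounded term-size: an application of $True^P_I(Tr)$ has the bounded term-size property if there is an integer $L$ such that the size of every ground substitution $\theta$ used to produce an atom in $True^P_I(Tr)$ is less than $L$. The program $P$ has the bounded term-size property if every application of $True^P_I$ used to construct $WFM(P)$ has the bounded term-size property with the same bound $L$. *)

theory Defs
  imports Main
begin

text \<open>Terms over function symbols 'f (constants are 0-ary function symbols) and variables 'v.\<close>
datatype ('f, 'v) trm = Var 'v | Fn 'f "('f, 'v) trm list"

datatype ('p, 'f, 'v) atom = Atom 'p "('f, 'v) trm list"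

datatype ('p, 'f, 'v) lit = Pos "('p, 'f, 'v) atom" | Neg "('p, 'f, 'v) atom"

text \<open>A clause  B <- L1, ..., Ln  is a pair (B, [L1, ..., Ln]).\<close>
type_synonym ('p, 'f, 'v) clause = "('p, 'f, 'v) atom \<times> ('p, 'f, 'v) lit list"

fun tvars :: "('f, 'v) trm \<Rightarrow> 'v set" where
  "tvars (Var x) = {x}"
| "tvars (Fn f ts) = \<Union> (tvars ` set ts)"

fun tsubst :: "('v \<Rightarrow> ('f, 'v) trm) \<Rightarrow> ('f, 'v) trm \<Rightarrow> ('f, 'v) trm" where
  "tsubst \<theta> (Var x) = \<theta> x"
| "tsubst \<theta> (Fn f ts) = Fn f (map (tsubst \<theta>) ts)"

fun tsize :: "('f, 'v) trm \<Rightarrow> nat" where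
  "tsize (Var x) = 1"
| "tsize (Fn f ts) = Suc (sum_list (map tsize ts))"

fun wf_trm :: "('f \<Rightarrow> nat) \<Rightarrow> ('f, 'v) trm \<Rightarrow> bool" where
  "wf_trm ar (Var x) = True"
| "wf_trm ar (Fn f ts) = (length ts = ar f \<and> (\<forall>t\<in>set ts. wf_trm ar t))"

definition ground_trm :: "('f \<Rightarrow> nat) \<Rightarrow> ('f, 'v) trm \<Rightarrow> bool" where
  "ground_trm ar t \<longleftrightarrow> wf_trm ar t \<and> tvars t = {}"

fun avars :: "('p, 'f, 'v) atom \<Rightarrow> 'v set" where
  "avars (Atom p ts) = \<Union> (tvars ` set ts)"

fun asubst :: "('v \<Rightarrow> ('f, 'v) trm) \<Rightarrow> ('p, 'f, 'v) atom \<Rightarrow> ('p, 'f, 'v) atom" where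
  "asubst \<theta> (Atom p ts) = Atom p (map (tsubst \<theta>) ts)"

fun wf_atom :: "('f \<Rightarrow> nat) \<Rightarrow> ('p \<Rightarrow> nat) \<Rightarrow> ('p, 'f, 'v) atom \<Rightarrow> bool" where
  "wf_atom ar par (Atom p ts) = (length ts = par p \<and> (\<forall>t\<in>set ts. wf_trm ar t))"

fun lit_atom :: "('p, 'f, 'v) lit \<Rightarrow> ('p, 'f, 'v) atom" where
  "lit_atom (Pos A) = A"
| "lit_atom (Neg A) = A"

fun lsubst :: "('v \<Rightarrow> ('f, 'v) trm) \<Rightarrow> ('p, 'f, 'v) lit \<Rightarrow> ('p, 'f, 'v) lit" where
  "lsubst \<theta> (Pos A) = Pos (asubst \<theta> A)"
| "lsubst \<theta> (Neg A) = Neg (asubst \<theta> A)"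

definition cvars :: "('p, 'f, 'v) clause \<Rightarrow> 'v set" where
  "cvars c = avars (fst c) \<union> \<Union> ((avars \<circ> lit_atom) ` set (snd c))"

definition wf_clause :: "('f \<Rightarrow> nat) \<Rightarrow> ('p \<Rightarrow> nat) \<Rightarrow> ('p, 'f, 'v) clause \<Rightarrow> bool" where
  "wf_clause ar par c \<longleftrightarrow> wf_atom ar par (fst c) \<and> (\<forall>L\<in>set (snd c). wf_atom ar par (lit_atom L))"

definition normal_program :: "('f \<Rightarrow> nat) \<Rightarrow> ('p \<Rightarrow> nat) \<Rightarrow> ('p, 'f, 'v) clause set \<Rightarrow> bool" where
  "normal_program ar par P \<longleftrightarrow> finite P \<and> (\<forall>c\<in>P. wf_clause ar par c)"

definition herbrand_base :: "('f \<Rightarrow> nat) \<Rightarrow> ('p \<Rightarrow> nat) \<Rightarrow> ('p, 'f, 'v) atom set" where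
  "herbrand_base ar par = {A. wf_atom ar par A \<and> avars A = {}}"

definition ground_subst :: "('f \<Rightarrow> nat) \<Rightarrow> ('p, 'f, 'v) clause \<Rightarrow> ('v \<Rightarrow> ('f, 'v) trm) \<Rightarrow> bool" where
  "ground_subst ar c \<theta> \<longleftrightarrow> (\<forall>x\<in>cvars c. ground_trm ar (\<theta> x))"

definition subst_size :: "('p, 'f, 'v) clause \<Rightarrow> ('v \<Rightarrow> ('f, 'v) trm) \<Rightarrow> nat" where
  "subst_size c \<theta> = (\<Sum>x\<in>cvars c. tsize (\<theta> x))"

type_synonym ('p, 'f, 'v) interp = "('p, 'f, 'v) atom set \<times> ('p, 'f, 'v) atom set"
  \<comment> \<open>a 3-valued interpretation (Tr, Fa)\<close>

fun lit_true :: "('p, 'f, 'v) interp \<Rightarrow> ('p, 'f, 'v) lit \<Rightarrow> bool" where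
  "lit_true I (Pos A) = (A \<in> fst I)"
| "lit_true I (Neg A) = (A \<in> snd I)"

fun lit_false :: "('p, 'f, 'v) interp \<Rightarrow> ('p, 'f, 'v) lit \<Rightarrow> bool" where
  "lit_false I (Pos A) = (A \<in> snd I)"
| "lit_false I (Neg A) = (A \<in> fst I)"

fun lit_in :: "('p, 'f, 'v) lit \<Rightarrow> ('p, 'f, 'v) atom set \<Rightarrow> bool" where
  "lit_in (Pos A) S = (A \<in> S)"
| "lit_in (Neg A) S = False"

definition TrueOp :: "('f \<Rightarrow> nat) \<Rightarrow> ('p, 'f, 'v) clause set \<Rightarrow> ('p, 'f, 'v) interp
    \<Rightarrow> ('p, 'f, 'v) atom set \<Rightarrow> ('p, 'f, 'v) atom set" where
  "TrueOp ar P I Tr = {A. A \<notin> fst I \<and>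
     (\<exists>c\<in>P. \<exists>\<theta>. ground_subst ar c \<theta> \<and> A = asubst \<theta> (fst c) \<and>
        (\<forall>L\<in>set (snd c). lit_true I (lsubst \<theta> L) \<or> lit_in (lsubst \<theta> L) Tr))}"

definition FalseOp :: "('f \<Rightarrow> nat) \<Rightarrow> ('p \<Rightarrow> nat) \<Rightarrow> ('p, 'f, 'v) clause set \<Rightarrow> ('p, 'f, 'v) interp
    \<Rightarrow> ('p, 'f, 'v) atom set \<Rightarrow> ('p, 'f, 'v) atom set" where
  "FalseOp ar par P I Fa = {A \<in> herbrand_base ar par. A \<notin> snd I \<and>
     (\<forall>c\<in>P. \<forall>\<theta>. ground_subst ar c \<theta> \<and> A = asubst \<theta> (fst c) \<longrightarrow>
        (\<exists>L\<in>set (snd c). lit_false I (lsubst \<theta> L) \<or> lit_in (lsubst \<theta> L) Fa))}"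

definition TI :: "('f \<Rightarrow> nat) \<Rightarrow> ('p, 'f, 'v) clause set \<Rightarrow> ('p, 'f, 'v) interp \<Rightarrow> ('p, 'f, 'v) atom set" where
  "TI ar P I = lfp (TrueOp ar P I)"

definition FI :: "('f \<Rightarrow> nat) \<Rightarrow> ('p \<Rightarrow> nat) \<Rightarrow> ('p, 'f, 'v) clause set \<Rightarrow> ('p, 'f, 'v) interp \<Rightarrow> ('p, 'f, 'v) atom set" where
  "FI ar par P I = gfp (FalseOp ar par P I)"

definition wfm_step :: "('f \<Rightarrow> nat) \<Rightarrow> ('p \<Rightarrow> nat) \<Rightarrow> ('p, 'f, 'v) clause set \<Rightarrow> ('p, 'f, 'v) interp \<Rightarrow> ('p, 'f, 'v) interp" where
  "wfm_step ar par P I = (fst I \<union> TI ar P I, snd I \<union> FI ar par P I)"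

text \<open>The transfinite sequence WFM_alpha, represented by the set of all its stages
  (the transfinite iterates from (\<emptyset>;\<emptyset>), closed under successor and under unions,
  i.e. the tower of the inflationary operator wfm_step).\<close>
inductive_set wfm_stages :: "('f \<Rightarrow> nat) \<Rightarrow> ('p \<Rightarrow> nat) \<Rightarrow> ('p, 'f, 'v) clause set \<Rightarrow> ('p, 'f, 'v) interp set"
  for ar par P where
  succ: "I \<in> wfm_stages ar par P \<Longrightarrow> wfm_step ar par P I \<in> wfm_stages ar par P"
| union: "Y \<in> Pow (wfm_stages ar par P) \<Longrightarrow> (\<Union> (fst ` Y), \<Union> (snd ` Y)) \<in> wfm_stages ar par P"
  monos Pow_mono

definition WFM :: "('f \<Rightarrow> nat) \<Rightarrow> ('p \<Rightarrow> nat) \<Rightarrow> ('p, 'f, 'v) clause set \<Rightarrow> ('p, 'f, 'v) interp" where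
  "WFM ar par P = (THE I. I \<in> wfm_stages ar par P \<and> TI ar P I = {} \<and> FI ar par P I = {})"

definition bounded_term_size :: "('f \<Rightarrow> nat) \<Rightarrow> ('p \<Rightarrow> nat) \<Rightarrow> ('p, 'f, 'v) clause set \<Rightarrow> bool" where
  "bounded_term_size ar par P \<longleftrightarrow> (\<exists>L::nat. \<forall>I\<in>wfm_stages ar par P. \<forall>n::nat.
     let Tr = (TrueOp ar P I ^^ n) {} in
     \<forall>A\<in>TrueOp ar P I Tr.
       \<exists>c\<in>P. \<exists>\<theta>. ground_subst ar c \<theta> \<and> A = asubst \<theta> (fst c) \<and>
         (\<forall>L\<in>set (snd c). lit_true I (lsubst \<theta> L) \<or> lit_in (lsubst \<theta> L) Tr) \<and>
         subst_size c \<theta> < L)"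

end

theory Submission
  imports Defs "HOL-Library.Product_Order" "HOL-Library.Bourbaki_Witt_Fixpoint"
    "HOL-Library.Order_Continuity" "HOL-Library.FuncSet"
begin

text \<open>The stages of the construction form a tower that is well-ordered by inclusion, and an
  atom becomes true at exactly one stage I, namely as a member of T_I = lfp True_I. Since True_I
  is continuous, T_I is the union of the Kleene iterates of True_I. If WFM(P) has finitely many
  true atoms, fix for each of them a ground substitution deriving it at the first iterate of its
  stage; it stays a derivation at all later iterates, so the largest of these finitely many sizes
  is a uniform bound. Conversely, with a uniform bound L every true atom is a head instance of a
  clause under a ground substitution of size below L, and over a finite signature there are only
  finitely many such instances.\<close>

lemma wfm_step_inflationary: "I \<le> wfm_step ar par P I"
  by (simp add: less_eq_prod_def wfm_step_def)

text \<open>The stages are the Bourbaki-Witt tower of the inflationary map wfm_step above the empty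
  interpretation.\<close>

interpretation wfm: bourbaki_witt_fixpoint Sup "{(x, y). x \<le> y}" "wfm_step ar par P" for ar par P
  by (rule bourbaki_witt_fixpoint_complete_latticeI) (rule wfm_step_inflationary)

lemma Field_le_UNIV: "Field {(x, y :: 'a :: order). x \<le> y} = UNIV"
  by (auto simp: Field_def)

lemma wfm_stages_eq_iterates: "wfm_stages ar par P = wfm.iterates_above ar par P bot"
proof (intro equalityI subsetI)
  fix I assume "I \<in> wfm_stages ar par P"
  then show "I \<in> wfm.iterates_above ar par P bot"
  proof induction
    case (succ I)
    then show ?case by (blast intro: wfm.iterates_above.step)
  next
    case (union Y)
    show ?case
    proof (cases "Y = {}")
      case True
      then show ?thesis using wfm.iterates_above.base by (simp add: bot_prod_def)
    next
      case False
      have "Y \<in> Chains {(x, y). x \<le> y}"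
        using union by (auto intro: in_Chains_subset[OF wfm.chain_iterates_above] simp: Field_le_UNIV)
      then have "Sup Y \<in> wfm.iterates_above ar par P bot"
        using False union by (auto intro: wfm.iterates_above.Sup)
      then show ?thesis unfolding Sup_prod_def[of Y] .
    qed
  qed
next
  fix I assume "I \<in> wfm.iterates_above ar par P bot"
  then show "I \<in> wfm_stages ar par P"
  proof induction
    case base
    show ?case using wfm_stages.union[of "{}"] by (simp add: bot_prod_def)
  next
    case (step I)
    then show ?case by (blast intro: wfm_stages.succ)
  next
    case (Sup M)
    then show ?case unfolding Sup_prod_def[of M] by (blast intro: wfm_stages.union)
  qed
qed

lemma wfm_stages_successor_cases:
  assumes I: "I \<in> wfm_stages ar par P" and J: "J \<in> wfm_stages ar par P"
  shows "I = J \<or> wfm_step ar par P I \<le> J \<or> wfm_step ar par P J \<le> I"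
proof -
  have succ_le: "K = K' \<or> wfm_step ar par P K \<le> K'" if "K' \<in> wfm.iterates_above ar par P K" for K K'
    using wfm.iterates_above_successor[OF that] wfm.iterates_above_ge
    by (fastforce simp: Field_le_UNIV)
  from I J have "J \<in> wfm.iterates_above ar par P I \<or> I \<in> wfm.iterates_above ar par P J"
    by (intro wfm.iterates_above_triangle) (auto simp: wfm_stages_eq_iterates Field_le_UNIV)
  then show ?thesis using succ_le by blast
qed

lemma wfm_iterates_above_fixpoint:
  assumes "wfm_step ar par P I = I"
  shows "wfm.iterates_above ar par P I = {I}"
proof -
  have "J = I" if "J \<in> wfm.iterates_above ar par P I" for J
    using that
  proof induction
    case (Sup M)
    then have "M = {I}" by blast
    then show ?case by (simp add: Sup_prod_def)
  qed (use assms in auto)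
  then show ?thesis using wfm.iterates_above.base by blast
qed

lemma wfm_stages_le_fixpoint:
  assumes I: "I \<in> wfm_stages ar par P" and fp: "wfm_step ar par P I = I"
    and J: "J \<in> wfm_stages ar par P"
  shows "J \<le> I"
proof -
  from I J have "J \<in> wfm.iterates_above ar par P I \<or> I \<in> wfm.iterates_above ar par P J"
    by (intro wfm.iterates_above_triangle) (auto simp: wfm_stages_eq_iterates Field_le_UNIV)
  then show ?thesis
  proof
    assume "I \<in> wfm.iterates_above ar par P J"
    then show ?thesis using wfm.iterates_above_ge[of I ar par P J] by (simp add: Field_le_UNIV)
  qed (simp add: wfm_iterates_above_fixpoint[OF fp])
qed

lemma lit_in_mono: "lit_in L S \<Longrightarrow> S \<subseteq> S' \<Longrightarrow> lit_in L S'"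
  by (cases L) auto

lemma mono_TrueOp: "mono (TrueOp ar P I)"
  unfolding mono_def TrueOp_def using lit_in_mono by blast

lemma mono_FalseOp: "mono (FalseOp ar par P I)"
  unfolding mono_def FalseOp_def using lit_in_mono by blast

lemma TI_disjoint: "TI ar P I \<inter> fst I = {}"
  using lfp_unfold[OF mono_TrueOp, of ar P I] unfolding TI_def TrueOp_def by blast

lemma FI_disjoint: "FI ar par P I \<inter> snd I = {}"
  using gfp_unfold[OF mono_FalseOp, of ar par P I] unfolding FI_def FalseOp_def by blast

lemma wfm_step_fixpoint_iff: "wfm_step ar par P I = I \<longleftrightarrow> TI ar P I = {} \<and> FI ar par P I = {}"
  using TI_disjoint[of ar P I] FI_disjoint[of ar par P I]
  by (auto simp: wfm_step_def prod_eq_iff)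

lemma WFM_eq_Sup_stages: "WFM ar par P = Sup (wfm_stages ar par P)"
proof -
  let ?W = "Sup (wfm_stages ar par P)"
  have W: "?W \<in> wfm_stages ar par P"
    unfolding Sup_prod_def by (blast intro: wfm_stages.union)
  then have "wfm_step ar par P ?W \<le> ?W"
    by (blast intro: Sup_upper wfm_stages.succ)
  then have "wfm_step ar par P ?W = ?W"
    using wfm_step_inflationary by (blast intro: antisym)
  moreover have "I = ?W" if "I \<in> wfm_stages ar par P" "wfm_step ar par P I = I" for I
    using that W by (blast intro: antisym Sup_upper Sup_least wfm_stages_le_fixpoint)
  ultimately show ?thesis
    unfolding WFM_def wfm_step_fixpoint_iff[symmetric] using W by (intro the_equality) blast+
qed

lemma TI_subset_WFM:
  assumes "I \<in> wfm_stages ar par P"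
  shows "TI ar P I \<subseteq> fst (WFM ar par P)"
proof -
  have "wfm_step ar par P I \<le> WFM ar par P"
    unfolding WFM_eq_Sup_stages using assms by (blast intro: Sup_upper wfm_stages.succ)
  then show ?thesis by (auto simp: less_eq_prod_def wfm_step_def)
qed

lemma TI_stage_unique:
  assumes I: "I \<in> wfm_stages ar par P" and J: "J \<in> wfm_stages ar par P"
    and "A \<in> TI ar P I" and "A \<in> TI ar P J"
  shows "I = J"
proof -
  have "\<not> wfm_step ar par P K \<le> K'" if "A \<in> TI ar P K" "A \<in> TI ar P K'" for K K'
    using that TI_disjoint[of ar P K'] by (auto simp: less_eq_prod_def wfm_step_def)
  then show ?thesis using wfm_stages_successor_cases[OF I J] assms(3,4) by blast
qed

definition produces ::
    "('f \<Rightarrow> nat) \<Rightarrow> ('p, 'f, 'v) clause set \<Rightarrow> ('p, 'f, 'v) interp \<Rightarrow> ('p, 'f, 'v) atom set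
      \<Rightarrow> ('p, 'f, 'v) clause \<Rightarrow> ('v \<Rightarrow> ('f, 'v) trm) \<Rightarrow> ('p, 'f, 'v) atom \<Rightarrow> bool" where
  "produces ar P I Tr c \<theta> A \<longleftrightarrow> c \<in> P \<and> ground_subst ar c \<theta> \<and> A = asubst \<theta> (fst c) \<and>
     (\<forall>L\<in>set (snd c). lit_true I (lsubst \<theta> L) \<or> lit_in (lsubst \<theta> L) Tr)"

lemma mem_TrueOp_iff: "A \<in> TrueOp ar P I Tr \<longleftrightarrow> A \<notin> fst I \<and> (\<exists>c \<theta>. produces ar P I Tr c \<theta> A)"
  unfolding TrueOp_def produces_def by blast

lemma produces_mono: "produces ar P I Tr c \<theta> A \<Longrightarrow> Tr \<subseteq> Tr' \<Longrightarrow> produces ar P I Tr' c \<theta> A"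
  unfolding produces_def using lit_in_mono by metis

lemma sup_continuous_TrueOp:
  fixes P :: "('p, 'f, 'v) clause set"
  shows "sup_continuous (TrueOp ar P I)"
  unfolding sup_continuous_def
proof (intro allI impI equalityI)
  fix M :: "nat \<Rightarrow> ('p, 'f, 'v) atom set"
  assume M: "mono M"
  show "TrueOp ar P I (\<Union>i. M i) \<subseteq> (\<Union>i. TrueOp ar P I (M i))"
  proof
    fix A assume "A \<in> TrueOp ar P I (\<Union>i. M i)"
    then obtain c \<theta> where A: "A \<notin> fst I" and pr: "produces ar P I (\<Union>i. M i) c \<theta> A"
      by (auto simp: mem_TrueOp_iff)
    txt \<open>The finitely many body atoms used from the union already lie in a single M i.\<close>
    let ?B = "lit_atom ` lsubst \<theta> ` set (snd c) \<inter> (\<Union>i. M i)"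
    have fin: "finite ?B" by simp
    have "M i \<subseteq> M j \<or> M j \<subseteq> M i" for i j
      using monoD[OF M] nat_le_linear by metis
    then have chain: "subset.chain UNIV (range M)"
      unfolding subset.chain_def by blast
    obtain i where "?B \<subseteq> M i"
      by (rule finite_subset_Union_chain[OF fin _ _ chain]) auto
    then have "lit_in (lsubst \<theta> L) (M i)"
      if "L \<in> set (snd c)" "lit_in (lsubst \<theta> L) (\<Union>i. M i)" for L
      using that by (cases "lsubst \<theta> L") force+
    then have "produces ar P I (M i) c \<theta> A"
      using pr unfolding produces_def by blast
    then have "A \<in> TrueOp ar P I (M i)"
      unfolding mem_TrueOp_iff using A by blast
    then show "A \<in> (\<Union>i. TrueOp ar P I (M i))" by blast
  qed
  show "(\<Union>i. TrueOp ar P I (M i)) \<subseteq> TrueOp ar P I (\<Union>i. M i)"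
    using mono_TrueOp[THEN monoD] by (blast intro: UN_upper)
qed

lemma TI_eq_UN_iterates: "TI ar P I = (\<Union>n. (TrueOp ar P I ^^ n) {})"
  unfolding TI_def using sup_continuous_lfp[OF sup_continuous_TrueOp] by (simp add: bot_set_def)

lemma produced_in_TI: "A \<in> TrueOp ar P I ((TrueOp ar P I ^^ n) {}) \<Longrightarrow> A \<in> TI ar P I"
  unfolding TI_eq_UN_iterates by (rule UN_I[of "Suc n"]) simp_all

definition witness_size_bound ::
    "('f \<Rightarrow> nat) \<Rightarrow> ('p \<Rightarrow> nat) \<Rightarrow> ('p, 'f, 'v) clause set \<Rightarrow> ('p, 'f, 'v) atom \<Rightarrow> nat \<Rightarrow> bool" where
  "witness_size_bound ar par P A N \<longleftrightarrow> (\<forall>I\<in>wfm_stages ar par P. \<forall>n.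
     A \<in> TrueOp ar P I ((TrueOp ar P I ^^ n) {}) \<longrightarrow>
     (\<exists>c \<theta>. produces ar P I ((TrueOp ar P I ^^ n) {}) c \<theta> A \<and> subst_size c \<theta> < N))"

lemma bounded_term_size_iff: "bounded_term_size ar par P \<longleftrightarrow> (\<exists>N. \<forall>A. witness_size_bound ar par P A N)"
  unfolding bounded_term_size_def witness_size_bound_def produces_def Let_def by blast

lemma witness_size_bound_mono: "witness_size_bound ar par P A N \<Longrightarrow> N \<le> N' \<Longrightarrow> witness_size_bound ar par P A N'"
  unfolding witness_size_bound_def by (meson order.strict_trans2)

text \<open>An atom is produced at a unique stage, and a witness found at the first iterate producing
  it remains a witness at all later iterates.\<close>

lemma ex_witness_size_bound: "\<exists>N. witness_size_bound ar par P A N"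
proof (cases "\<exists>I\<in>wfm_stages ar par P. \<exists>n. A \<in> TrueOp ar P I ((TrueOp ar P I ^^ n) {})")
  case True
  then obtain I0 where I0: "I0 \<in> wfm_stages ar par P"
    and ex: "\<exists>n. A \<in> TrueOp ar P I0 ((TrueOp ar P I0 ^^ n) {})"
    by blast
  define n0 where "n0 = (LEAST n. A \<in> TrueOp ar P I0 ((TrueOp ar P I0 ^^ n) {}))"
  have n0: "A \<in> TrueOp ar P I0 ((TrueOp ar P I0 ^^ n0) {})"
    unfolding n0_def using ex by (rule LeastI_ex)
  then obtain c \<theta> where c\<theta>: "produces ar P I0 ((TrueOp ar P I0 ^^ n0) {}) c \<theta> A"
    using mem_TrueOp_iff by blast
  have "produces ar P I ((TrueOp ar P I ^^ n) {}) c \<theta> A"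
    if I: "I \<in> wfm_stages ar par P" and A: "A \<in> TrueOp ar P I ((TrueOp ar P I ^^ n) {})" for I n
  proof -
    have "I = I0"
      using TI_stage_unique[OF I I0] produced_in_TI[OF A] produced_in_TI[OF n0] by blast
    moreover from this have "n0 \<le> n"
      unfolding n0_def using A by (simp add: Least_le)
    then have "(TrueOp ar P I0 ^^ n0) {} \<subseteq> (TrueOp ar P I0 ^^ n) {}"
      by (rule funpow_mono2[OF mono_TrueOp]) simp_all
    ultimately show ?thesis
      using produces_mono[OF c\<theta>] by simp
  qed
  then show ?thesis
    unfolding witness_size_bound_def by (intro exI[of _ "Suc (subst_size c \<theta>)"]) blast
qed (unfold witness_size_bound_def, blast)

lemma bounded_term_size_if_finite_WFM:
  assumes fin: "finite (fst (WFM ar par P))"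
  shows "bounded_term_size ar par P"
proof -
  have "\<forall>A. \<exists>N. witness_size_bound ar par P A N"
    using ex_witness_size_bound by blast
  then obtain bound where bound: "\<And>A. witness_size_bound ar par P A (bound A)"
    by metis
  let ?N = "\<Sum>A\<in>fst (WFM ar par P). bound A"
  have "witness_size_bound ar par P A ?N" for A
  proof (cases "A \<in> fst (WFM ar par P)")
    case True
    then have "bound A \<le> ?N"
      using fin by (simp add: member_le_sum)
    then show ?thesis using bound witness_size_bound_mono by blast
  next
    case False
    then show ?thesis
      using TI_subset_WFM produced_in_TI unfolding witness_size_bound_def by blast
  qed
  then show ?thesis unfolding bounded_term_size_iff by blast
qed

lemma finite_tvars: "finite (tvars t)"
  by (induction t) auto

lemma finite_avars: "finite (avars A)"
  by (cases A) (simp add: finite_tvars)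

lemma finite_cvars: "finite (cvars c)"
  by (simp add: cvars_def finite_avars)

lemma tsubst_cong: "(\<And>x. x \<in> tvars t \<Longrightarrow> \<theta> x = \<theta>' x) \<Longrightarrow> tsubst \<theta> t = tsubst \<theta>' t"
  by (induction t) auto

lemma asubst_cong: "(\<And>x. x \<in> avars A \<Longrightarrow> \<theta> x = \<theta>' x) \<Longrightarrow> asubst \<theta> A = asubst \<theta>' A"
  by (cases A) (auto intro!: tsubst_cong)

lemma finite_ground_trms_size_le:
  "finite {t :: ('f::finite, 'v) trm. ground_trm ar t \<and> tsize t \<le> k}"
proof (induction k)
  case 0
  have nonzero: "tsize t \<noteq> 0" for t :: "('f, 'v) trm"
    by (cases t) auto
  show ?case by (simp add: nonzero)
next
  case (Suc k)
  let ?G = "{t :: ('f, 'v) trm. ground_trm ar t \<and> tsize t \<le> k}"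
  have "{t. ground_trm ar t \<and> tsize t \<le> Suc k} \<subseteq> (\<Union>f. Fn f ` {ts. set ts \<subseteq> ?G \<and> length ts = ar f})"
  proof
    fix t :: "('f, 'v) trm"
    assume t: "t \<in> {t. ground_trm ar t \<and> tsize t \<le> Suc k}"
    then obtain f ts where f: "t = Fn f ts"
      by (cases t) (auto simp: ground_trm_def)
    have "tsize s \<le> k" if "s \<in> set ts" for s
    proof -
      have "tsize s \<le> sum_list (map tsize ts)"
        using that by (simp add: member_le_sum_list)
      then show ?thesis using t f by simp
    qed
    then have "set ts \<subseteq> ?G"
      using t f by (auto simp: ground_trm_def)
    moreover have "length ts = ar f"
      using t f by (simp add: ground_trm_def)
    ultimately show "t \<in> (\<Union>f. Fn f ` {ts. set ts \<subseteq> ?G \<and> length ts = ar f})"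
      using f by blast
  qed
  moreover have "finite (\<Union>f. Fn f ` {ts. set ts \<subseteq> ?G \<and> length ts = ar f})"
    using Suc by (simp add: finite_lists_length_eq)
  ultimately show ?case by (rule finite_subset)
qed

definition small_head_instances ::
    "('f \<Rightarrow> nat) \<Rightarrow> ('p, 'f, 'v) clause set \<Rightarrow> nat \<Rightarrow> ('p, 'f, 'v) atom set" where
  "small_head_instances ar P N =
     {asubst \<theta> (fst c) |c \<theta>. c \<in> P \<and> ground_subst ar c \<theta> \<and> subst_size c \<theta> < N}"

lemma finite_small_head_instances:
  fixes ar :: "'f::finite \<Rightarrow> nat" and P :: "('p, 'f, 'v) clause set"
  assumes "finite P"
  shows "finite (small_head_instances ar P N)"
proof -
  let ?G = "{t :: ('f, 'v) trm. ground_trm ar t \<and> tsize t \<le> N}"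
  have "small_head_instances ar P N \<subseteq> (\<Union>c\<in>P. (\<lambda>\<sigma>. asubst \<sigma> (fst c)) ` PiE (cvars c) (\<lambda>_. ?G))"
  proof
    fix A assume "A \<in> small_head_instances ar P N"
    then obtain c \<theta> where c: "c \<in> P" and g: "ground_subst ar c \<theta>" and A: "A = asubst \<theta> (fst c)"
      and s: "subst_size c \<theta> < N"
      unfolding small_head_instances_def by blast
    have "tsize (\<theta> x) \<le> subst_size c \<theta>" if "x \<in> cvars c" for x
      unfolding subst_size_def using that finite_cvars[of c] by (intro member_le_sum) auto
    then have "restrict \<theta> (cvars c) \<in> PiE (cvars c) (\<lambda>_. ?G)"
      using g s unfolding ground_subst_def by fastforce
    moreover have "A = asubst (restrict \<theta> (cvars c)) (fst c)"
      unfolding A by (rule asubst_cong) (simp add: cvars_def)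
    ultimately show "A \<in> (\<Union>c\<in>P. (\<lambda>\<sigma>. asubst \<sigma> (fst c)) ` PiE (cvars c) (\<lambda>_. ?G))"
      using c by blast
  qed
  moreover have "finite (\<Union>c\<in>P. (\<lambda>\<sigma>. asubst \<sigma> (fst c)) ` PiE (cvars c) (\<lambda>_. ?G))"
    using assms by (simp add: finite_PiE finite_cvars finite_ground_trms_size_le)
  ultimately show ?thesis by (rule finite_subset)
qed

lemma finite_WFM_if_bounded_term_size:
  fixes ar :: "'f::finite \<Rightarrow> nat" and P :: "('p, 'f, 'v) clause set"
  assumes "finite P" and "bounded_term_size ar par P"
  shows "finite (fst (WFM ar par P))"
proof -
  obtain N where N: "\<And>A. witness_size_bound ar par P A N"
    using assms(2) unfolding bounded_term_size_iff by blast
  have iterates: "(TrueOp ar P I ^^ n) {} \<subseteq> small_head_instances ar P N"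
    if I: "I \<in> wfm_stages ar par P" for I n
  proof (cases n)
    case (Suc m)
    then show ?thesis
      using N[unfolded witness_size_bound_def] I
      unfolding small_head_instances_def produces_def by fastforce
  qed simp
  have "fst I \<subseteq> small_head_instances ar P N" if "I \<in> wfm_stages ar par P" for I
    using that
  proof induction
    case (succ I)
    then show ?case
      using iterates[OF succ.hyps] by (auto simp: wfm_step_def TI_eq_UN_iterates)
  qed auto
  then have "fst (WFM ar par P) \<subseteq> small_head_instances ar P N"
    unfolding WFM_eq_Sup_stages Sup_prod_def by auto
  then show ?thesis
    using finite_small_head_instances[OF assms(1)] by (rule finite_subset)
qed

theorem theorem1:
  fixes ar :: "'f::finite \<Rightarrow> nat" and par :: "'p \<Rightarrow> nat"
    and P :: "('p, 'f, 'v) clause set"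
  assumes "normal_program ar par P"
  shows "finite (fst (WFM ar par P)) \<longleftrightarrow> bounded_term_size ar par P"
  using assms bounded_term_size_if_finite_WFM finite_WFM_if_bounded_term_size
  unfolding normal_program_def by blast

end
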